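(* Let $\kappa > \omega$ be a regular cardinal. Suppose $F \subseteq [\kappa]^\kappa$ is an unreaped family with $|F| = \mathfrak{r}(\kappa)$, and suppose there is a club $E_1 \subseteq \kappa$ such that for every club $E \subseteq E_1$ there exists $A \in F$ with $|A \setminus \mathrm{set}(E, E_1)| < \kappa$. Then $\mathfrak{d}(\kappa) \leq \mathfrak{r}(\kappa)$.
   Context: For $A \in [\kappa]^\kappa$ define $s_A:\kappa\to A$ by $s_A(\alpha) = \min(A \setminus (\alpha+1))$. For clubs $E_2 \subseteq E_1 \subseteq \kappa$ and $\xi \in \kappa$ let $\mathrm{set}(E_1,\xi) = \{\zeta : \xi \leq \zeta < s_{E_1}(\xi)\}$ and $\mathrm{set}(E_2,E_1) = \bigcup\{\mathrm{set}(E_1,\xi) : \xi \in E_2\}$. For $F \subseteq [\kappa]^\kappa$ and $B \subseteq \kappa$, $B$ reaps $F$ if $|A \cap B| = |A \cap (\kappa \setminus B)| = \kappa$ for every $A \in F$; $F$ is unreaped if no $B \subseteq \kappa$ reaps $F$; $\mathfrak{r}(\kappa)$ is the least size of an unreaped family in $[\kappa]^\kappa$. For $f,g\in\kappa^\kappa$, $f \leq^* g$ means $|\{\alpha : g(\alpha)<f(\alpha)\}|<\kappa$; $F\subseteq \kappa^\kappa$ is dominating if every $g \in \kappa^\kappa$ satisfies $g \leq^* f$ for some $f\in F$; $\mathfrak{d}(\kappa)$ is the least size of a dominating family. *)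

theory Defs
  imports Main "HOL-Library.Countable_Set"
begin

text \<open>The cardinal kappa is represented by a well-ordered type 'k: the ordinals below
kappa are the elements of 'k, ordered by the type's order.\<close>

definition card_less :: "'a set \<Rightarrow> 'b set \<Rightarrow> bool" where
  "card_less A B \<longleftrightarrow> (card_of A, card_of B) \<in> ordLess"

definition card_leq :: "'a set \<Rightarrow> 'b set \<Rightarrow> bool" where
  "card_leq A B \<longleftrightarrow> (card_of A, card_of B) \<in> ordLeq"

definition card_eq :: "'a set \<Rightarrow> 'b set \<Rightarrow> bool" where
  "card_eq A B \<longleftrightarrow> (card_of A, card_of B) \<in> ordIso"

definition uncountable_regular_cardinal :: "'k::wellorder itself \<Rightarrow> bool" where
  "uncountable_regular_cardinal _ \<longleftrightarrow>
     \<not> countable (UNIV :: 'k set) \<and>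
     (\<forall>\<alpha>::'k. card_less {\<beta>. \<beta> < \<alpha>} (UNIV :: 'k set)) \<and>
     (\<forall>X::'k set. (\<forall>\<alpha>. \<exists>x\<in>X. \<alpha> \<le> x) \<longrightarrow> card_eq X (UNIV :: 'k set))"

definition full_subsets :: "'k set set" where
  "full_subsets = {A. card_eq A (UNIV :: 'k set)}"

definition s_fun :: "'k::wellorder set \<Rightarrow> 'k \<Rightarrow> 'k" where
  "s_fun A \<alpha> = (LEAST \<beta>. \<beta> \<in> A \<and> \<alpha> < \<beta>)"

definition set_pt :: "'k::wellorder set \<Rightarrow> 'k \<Rightarrow> 'k set" where
  "set_pt E1 \<xi> = {\<zeta>. \<xi> \<le> \<zeta> \<and> \<zeta> < s_fun E1 \<xi>}"

definition set_club :: "'k::wellorder set \<Rightarrow> 'k set \<Rightarrow> 'k set" where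
  "set_club E2 E1 = (\<Union>\<xi>\<in>E2. set_pt E1 \<xi>)"

text \<open>Closed unbounded subsets of kappa.  Closedness: every nonzero alpha below which
  E is cofinal (necessarily a limit) belongs to E.\<close>
definition club :: "'k::wellorder set \<Rightarrow> bool" where
  "club E \<longleftrightarrow>
     (\<forall>\<beta>. \<exists>\<gamma>\<in>E. \<beta> \<le> \<gamma>) \<and>
     (\<forall>\<alpha>. (\<exists>\<beta>. \<beta> < \<alpha>) \<and> (\<forall>\<beta><\<alpha>. \<exists>\<gamma>\<in>E. \<beta> < \<gamma> \<and> \<gamma> < \<alpha>) \<longrightarrow> \<alpha> \<in> E)"

definition reaps :: "'k set \<Rightarrow> 'k set set \<Rightarrow> bool" where
  "reaps B F \<longleftrightarrow> (\<forall>A\<in>F. card_eq (A \<inter> B) (UNIV :: 'k set) \<and>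
                                card_eq (A \<inter> (UNIV - B)) (UNIV :: 'k set))"

definition unreaped :: "'k set set \<Rightarrow> bool" where
  "unreaped F \<longleftrightarrow> \<not> (\<exists>B. reaps B F)"

text \<open>|F| = r(kappa): F is an unreaped subfamily of [kappa]^kappa of minimal size.\<close>
definition has_size_reaping_number :: "'k set set \<Rightarrow> bool" where
  "has_size_reaping_number F \<longleftrightarrow>
     (\<forall>G :: 'k set set. G \<subseteq> full_subsets \<and> unreaped G \<longrightarrow> card_leq F G)"

definition le_star :: "('k::wellorder \<Rightarrow> 'k) \<Rightarrow> ('k \<Rightarrow> 'k) \<Rightarrow> bool" where
  "le_star f g \<longleftrightarrow> card_less {\<alpha>. g \<alpha> < f \<alpha>} (UNIV :: 'k set)"

definition dominating :: "('k::wellorder \<Rightarrow> 'k) set \<Rightarrow> bool" where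
  "dominating D \<longleftrightarrow> (\<forall>g. \<exists>f\<in>D. le_star g f)"

definition dominating_number_le :: "'k::wellorder itself \<Rightarrow> 'b set \<Rightarrow> bool" where
  "dominating_number_le _ X \<longleftrightarrow> (\<exists>D :: ('k \<Rightarrow> 'k) set. dominating D \<and> card_leq D X)"

end

theory Submission
  imports Defs "HOL-Library.Countable_Set_Type"
begin

text \<open>Given g, the closure points of g inside E1 form a club E \<subseteq> E1.  Pick A \<in> F that is
almost contained in set(E, E1) and put f_A(\<alpha>) = s_A(s_E1(\<alpha>)).  For large \<alpha>, the point
f_A(\<alpha>) lies in some interval [\<xi>, s_E1(\<xi>)) with \<xi> \<in> E; as no point of E1 lies strictly
between \<alpha> and s_E1(\<alpha>), this forces \<alpha> < \<xi>, hence g(\<alpha>) < \<xi> \<le> f_A(\<alpha>).  So the family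
{f_A : A \<in> F}, of size at most |F| = r(\<kappa>), is dominating.\<close>

lemma card_less_UNIV_iff_bounded:
  assumes "uncountable_regular_cardinal TYPE('k::wellorder)"
  shows "card_less (X :: 'k set) (UNIV :: 'k set) \<longleftrightarrow> (\<exists>\<alpha>. \<forall>x\<in>X. x < \<alpha>)"
proof
  assume small: "card_less X (UNIV :: 'k set)"
  show "\<exists>\<alpha>. \<forall>x\<in>X. x < \<alpha>"
  proof (rule ccontr)
    assume "\<not> (\<exists>\<alpha>. \<forall>x\<in>X. x < \<alpha>)"
    then have "card_eq X (UNIV :: 'k set)"
      using assms unfolding uncountable_regular_cardinal_def by (meson not_le)
    then show False
      using small not_ordLess_ordIso unfolding card_eq_def card_less_def by metis
  qed
next
  assume "\<exists>\<alpha>. \<forall>x\<in>X. x < \<alpha>"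
  then obtain \<alpha> where "X \<subseteq> {\<beta>. \<beta> < \<alpha>}" by blast
  moreover have "card_less {\<beta>. \<beta> < \<alpha>} (UNIV :: 'k set)"
    using assms unfolding uncountable_regular_cardinal_def by blast
  ultimately show "card_less X (UNIV :: 'k set)"
    unfolding card_less_def using card_of_mono1 ordLeq_ordLess_trans by blast
qed

lemma countable_imp_card_less_UNIV:
  assumes "uncountable_regular_cardinal TYPE('k::wellorder)" and "countable (X :: 'k set)"
  shows "card_less X (UNIV :: 'k set)"
proof -
  have "(card_of X, card_of (UNIV :: nat set)) \<in> ordLeq"
    using assms(2) countable_card_of_nat by blast
  moreover have "(card_of (UNIV :: nat set), card_of (UNIV :: 'k set)) \<in> ordLess"
    using assms(1) countable_card_of_nat[of "UNIV :: 'k set"]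
      not_ordLeq_iff_ordLess[OF card_of_Well_order card_of_Well_order]
    unfolding uncountable_regular_cardinal_def by blast
  ultimately show ?thesis
    unfolding card_less_def using ordLeq_ordLess_trans by blast
qed

lemma countable_imp_bounded:
  assumes "uncountable_regular_cardinal TYPE('k::wellorder)" and "countable (X :: 'k set)"
  shows "\<exists>\<alpha>. \<forall>x\<in>X. x < \<alpha>"
  using assms countable_imp_card_less_UNIV card_less_UNIV_iff_bounded by blast

lemma exists_greater:
  assumes "uncountable_regular_cardinal TYPE('k::wellorder)"
  shows "\<exists>\<beta>. (\<alpha>::'k) < \<beta>"
  using countable_imp_bounded[OF assms, of "{\<alpha>}"] by blast

lemma image_initial_segment_bounded:
  assumes "uncountable_regular_cardinal TYPE('k::wellorder)"
  shows "\<exists>N. \<forall>\<gamma>\<le>(b::'k). g \<gamma> < (N::'k)"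
proof -
  obtain b' where "b < b'" using exists_greater[OF assms] by blast
  then have "{\<gamma>. \<gamma> \<le> b} \<subseteq> {\<gamma>. \<gamma> < b'}" by auto
  then have "card_less {\<gamma>. \<gamma> \<le> b} (UNIV :: 'k set)"
    using card_less_UNIV_iff_bounded[OF assms] by blast
  then have "card_less (g ` {\<gamma>. \<gamma> \<le> b}) (UNIV :: 'k set)"
    unfolding card_less_def using card_of_image ordLeq_ordLess_trans by blast
  then obtain N where "\<forall>x\<in>g ` {\<gamma>. \<gamma> \<le> b}. x < N"
    using card_less_UNIV_iff_bounded[OF assms] by blast
  then show ?thesis by auto
qed

lemma full_subset_unbounded:
  assumes "uncountable_regular_cardinal TYPE('k::wellorder)" and "(A :: 'k set) \<in> full_subsets"
  shows "\<exists>\<gamma>\<in>A. \<beta> \<le> \<gamma>"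
proof (rule ccontr)
  assume "\<not> (\<exists>\<gamma>\<in>A. \<beta> \<le> \<gamma>)"
  then have "card_less A (UNIV :: 'k set)"
    using card_less_UNIV_iff_bounded[OF assms(1)] by (meson not_le)
  then show False
    using assms(2) not_ordLess_ordIso unfolding full_subsets_def card_eq_def card_less_def
    by (metis mem_Collect_eq)
qed

lemma club_unbounded: "club E \<Longrightarrow> \<exists>\<gamma>\<in>E. \<beta> \<le> \<gamma>"
  unfolding club_def by blast

lemma club_closed:
  "club E \<Longrightarrow> \<beta> < \<alpha> \<Longrightarrow> (\<And>\<beta>. \<beta> < \<alpha> \<Longrightarrow> \<exists>\<gamma>\<in>E. \<beta> < \<gamma> \<and> \<gamma> < \<alpha>) \<Longrightarrow> \<alpha> \<in> E"
  unfolding club_def by blast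

lemma
  fixes A :: "'k::wellorder set"
  assumes "uncountable_regular_cardinal TYPE('k)" and "\<And>\<beta>. \<exists>\<gamma>\<in>A. \<beta> \<le> \<gamma>"
  shows s_fun_mem: "s_fun A \<alpha> \<in> A" and s_fun_greater: "\<alpha> < s_fun A \<alpha>"
proof -
  obtain \<beta> where "\<alpha> < \<beta>" using exists_greater[OF assms(1)] by blast
  then obtain \<gamma> where "\<gamma> \<in> A \<and> \<alpha> < \<gamma>" using assms(2) by (meson order.strict_trans2)
  then show "s_fun A \<alpha> \<in> A" "\<alpha> < s_fun A \<alpha>"
    unfolding s_fun_def using LeastI[of "\<lambda>\<beta>. \<beta> \<in> A \<and> \<alpha> < \<beta>"] by auto
qed

lemma s_fun_least: "\<gamma> \<in> A \<Longrightarrow> \<alpha> < \<gamma> \<Longrightarrow> s_fun A \<alpha> \<le> \<gamma>"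
  unfolding s_fun_def by (simp add: Least_le)

text \<open>Only cf(\<kappa>) > \<omega> is used: the sequence is bounded, and its least upper bound is its limit.\<close>
lemma increasing_sequence_limit:
  fixes b :: "nat \<Rightarrow> 'k::wellorder"
  assumes "uncountable_regular_cardinal TYPE('k)" and "\<And>n. b n < b (Suc n)"
  obtains \<xi> :: 'k where "\<And>n. b n < \<xi>" and "\<And>\<beta>. \<beta> < \<xi> \<Longrightarrow> \<exists>n. \<beta> < b n"
proof
  define \<xi> where "\<xi> = (LEAST x. \<forall>n. b n \<le> x)"
  obtain U where "\<forall>n. b n < U"
    using countable_imp_bounded[OF assms(1), of "range b"] by auto
  then have upper: "b n \<le> \<xi>" for n
    unfolding \<xi>_def using LeastI_ex[of "\<lambda>x. \<forall>n. b n \<le> x"] less_imp_le by blast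
  show "b n < \<xi>" for n using assms(2)[of n] upper[of "Suc n"] by simp
  show "\<exists>n. \<beta> < b n" if "\<beta> < \<xi>" for \<beta>
    using that Least_le[of "\<lambda>x. \<forall>n. b n \<le> x" \<beta>] unfolding \<xi>_def[symmetric]
    by (meson not_le)
qed

definition closure_points :: "('k::wellorder \<Rightarrow> 'k) \<Rightarrow> 'k set \<Rightarrow> 'k set" where
  "closure_points g E = {\<xi>\<in>E. \<forall>\<beta><\<xi>. g \<beta> < \<xi>}"

lemma closure_points_unbounded:
  assumes urc: "uncountable_regular_cardinal TYPE('k::wellorder)" and "club (E :: 'k set)"
  shows "\<exists>\<xi>\<in>closure_points g E. \<beta> \<le> \<xi>"
proof -
  have "\<exists>c. c \<in> E \<and> b < c \<and> (\<forall>\<gamma>\<le>b. g \<gamma> < c)" for b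
  proof -
    obtain N where N: "\<forall>\<gamma>\<le>b. g \<gamma> < N" using image_initial_segment_bounded[OF urc] by blast
    obtain b' where "b < b'" using exists_greater[OF urc] by blast
    moreover obtain c where "c \<in> E" "max N b' \<le> c" using club_unbounded[OF assms(2)] by blast
    ultimately show ?thesis using N by (intro exI[of _ c]) auto
  qed
  then obtain h where h: "\<And>b. h b \<in> E \<and> b < h b \<and> (\<forall>\<gamma>\<le>b. g \<gamma> < h b)" by metis
  define b where "b n = (h ^^ n) \<beta>" for n
  have b_Suc: "b (Suc n) = h (b n)" for n unfolding b_def by simp
  obtain \<xi> where above: "\<And>n. b n < \<xi>" and below: "\<And>\<beta>'. \<beta>' < \<xi> \<Longrightarrow> \<exists>n. \<beta>' < b n"
    using increasing_sequence_limit[OF urc, of b] h b_Suc by metis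
  have "\<xi> \<in> E"
    using club_closed[OF assms(2) above[of 0]] below above h b_Suc
    by (metis order.strict_trans)
  moreover have "g \<gamma> < \<xi>" if "\<gamma> < \<xi>" for \<gamma>
    using below[OF that] h above b_Suc by (metis less_imp_le order.strict_trans)
  moreover have "\<beta> \<le> \<xi>" using above[of 0] unfolding b_def by simp
  ultimately show ?thesis unfolding closure_points_def by blast
qed

lemma club_closure_points:
  assumes "uncountable_regular_cardinal TYPE('k::wellorder)" and "club (E :: 'k set)"
  shows "club (closure_points g E)"
  unfolding club_def
proof (intro conjI allI impI)
  show "\<exists>\<xi>\<in>closure_points g E. \<beta> \<le> \<xi>" for \<beta>
    using closure_points_unbounded[OF assms] .
  fix \<alpha>
  assume "(\<exists>\<beta>. \<beta> < \<alpha>) \<and> (\<forall>\<beta><\<alpha>. \<exists>\<gamma>\<in>closure_points g E. \<beta> < \<gamma> \<and> \<gamma> < \<alpha>)"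
  then show "\<alpha> \<in> closure_points g E"
    using club_closed[OF assms(2)] unfolding closure_points_def
    by (smt (verit) mem_Collect_eq order.strict_trans)
qed

lemma closure_points_subset: "closure_points g E \<subseteq> E"
  unfolding closure_points_def by blast

lemma le_star_s_fun_comp:
  assumes urc: "uncountable_regular_cardinal TYPE('k::wellorder)"
    and E1: "club (E1 :: 'k set)" and A: "A \<in> full_subsets"
    and small: "card_less (A - set_club (closure_points g E1) E1) (UNIV :: 'k set)"
  shows "le_star g (\<lambda>\<alpha>. s_fun A (s_fun E1 \<alpha>))"
proof -
  let ?E = "closure_points g E1"
  obtain M where M: "\<forall>x\<in>A - set_club ?E E1. x < M"
    using small card_less_UNIV_iff_bounded[OF urc] by blast
  have "g \<alpha> \<le> s_fun A (s_fun E1 \<alpha>)" if "M \<le> \<alpha>" for \<alpha>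
  proof -
    let ?e = "s_fun E1 \<alpha>" and ?a = "s_fun A (s_fun E1 \<alpha>)"
    have "?e \<in> E1" "\<alpha> < ?e"
      using s_fun_mem s_fun_greater urc club_unbounded[OF E1] by metis+
    moreover have "?a \<in> A" "?e < ?a"
      using s_fun_mem s_fun_greater urc full_subset_unbounded[OF urc A] by metis+
    ultimately have "?a \<in> set_club ?E E1"
      using M that by (meson DiffI leD order.strict_trans order.strict_trans2)
    then obtain \<xi> where \<xi>: "\<xi> \<in> ?E" "\<xi> \<le> ?a" "?a < s_fun E1 \<xi>"
      unfolding set_club_def set_pt_def by blast
    \<comment> \<open>if \<xi> \<le> \<alpha> then \<xi> < s_E1(\<alpha>) \<in> E1, so s_E1(\<xi>) \<le> s_E1(\<alpha>) < s_A(s_E1(\<alpha>))\<close>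
    have "\<alpha> < \<xi>"
    proof (rule ccontr)
      assume "\<not> \<alpha> < \<xi>"
      then have "\<xi> < ?e" using \<open>\<alpha> < ?e\<close> by (meson not_less order.strict_trans1)
      then have "s_fun E1 \<xi> \<le> ?e" using s_fun_least \<open>?e \<in> E1\<close> by blast
      then show False using \<xi>(3) \<open>?e < ?a\<close> by simp
    qed
    then show ?thesis using \<xi> unfolding closure_points_def by fastforce
  qed
  then have "{\<alpha>. s_fun A (s_fun E1 \<alpha>) < g \<alpha>} \<subseteq> {\<alpha>. \<alpha> < M}"
    by (auto simp: not_le[symmetric])
  then show ?thesis
    unfolding le_star_def using card_less_UNIV_iff_bounded[OF urc] by blast
qed

theorem lemma3p4:
  fixes F :: "'k::wellorder set set"
  assumes "uncountable_regular_cardinal TYPE('k)"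
    and "F \<subseteq> full_subsets"
    and "unreaped F"
    and "has_size_reaping_number F"
    and "\<exists>E1. club E1 \<and>
           (\<forall>E. club E \<and> E \<subseteq> E1 \<longrightarrow>
               (\<exists>A\<in>F. card_less (A - set_club E E1) (UNIV :: 'k set)))"
  shows "dominating_number_le TYPE('k) F"
proof -
  obtain E1 where E1: "club E1" and almost_covered: "\<And>E. club E \<Longrightarrow> E \<subseteq> E1 \<Longrightarrow>
      \<exists>A\<in>F. card_less (A - set_club E E1) (UNIV :: 'k set)"
    using assms(5) by blast
  define f where "f A = (\<lambda>\<alpha>. s_fun A (s_fun E1 \<alpha>))" for A
  have "dominating (f ` F)"
    unfolding dominating_def
  proof
    fix g :: "'k \<Rightarrow> 'k"
    obtain A where "A \<in> F" and "card_less (A - set_club (closure_points g E1) E1) (UNIV :: 'k set)"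
      using almost_covered club_closure_points[OF assms(1) E1] closure_points_subset by blast
    then show "\<exists>f'\<in>f ` F. le_star g f'"
      using le_star_s_fun_comp[OF assms(1) E1] assms(2) unfolding f_def by blast
  qed
  moreover have "card_leq (f ` F) F"
    unfolding card_leq_def using card_of_image by simp
  ultimately show ?thesis
    unfolding dominating_number_le_def by blast
qed

end
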